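(* For every integer $n \geq 1$, the number of three-candidate ballot sequences of length $n$ with matching parity equals the $n$-th Riordan number $R(n)$.
   Context: A three-candidate ballot sequence of length $n$ is a word $b_1\cdots b_n$ with $b_i\in\{A,B,C\}$ such that in every prefix $b_1\cdots b_k$ ($1\le k\le n$) the number of $A$'s is at least the number of $B$'s, which is at least the number of $C$'s. It has matching parity if the numbers of $A$'s, $B$'s and $C$'s in the whole word are all congruent modulo $2$. $R(n)$ is the number of Riordan paths of length $n$: lattice paths from $(0,0)$ to $(n,0)$ with steps $U=(1,1)$, $F=(1,0)$, $D=(1,-1)$ that never go below the $x$-axis and have no flat step $F$ on the $x$-axis. *)

theory Defs
  imports Main
begin

datatype cand = A | B | C

definition cnt :: "cand \<Rightarrow> cand list \<Rightarrow> nat" where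
  "cnt c w = length (filter (\<lambda>x. x = c) w)"

definition ballot3 :: "cand list \<Rightarrow> bool" where
  "ballot3 w \<longleftrightarrow> (\<forall>k\<in>{1..length w}.
      cnt B (take k w) \<le> cnt A (take k w) \<and> cnt C (take k w) \<le> cnt B (take k w))"

definition matching_parity :: "cand list \<Rightarrow> bool" where
  "matching_parity w \<longleftrightarrow> cnt A w mod 2 = cnt B w mod 2 \<and> cnt B w mod 2 = cnt C w mod 2"

datatype step = U | F | D

fun stepval :: "step \<Rightarrow> int" where
  "stepval U = 1" | "stepval F = 0" | "stepval D = -1"

definition height :: "step list \<Rightarrow> nat \<Rightarrow> int" where
  "height p k = sum_list (map stepval (take k p))"

definition riordan_path :: "step list \<Rightarrow> bool" where
  "riordan_path p \<longleftrightarrow> height p (length p) = 0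
     \<and> (\<forall>k\<le>length p. height p k \<ge> 0)
     \<and> (\<forall>i<length p. p ! i = F \<longrightarrow> height p i \<noteq> 0)"

definition riordan :: "nat \<Rightarrow> nat" where
  "riordan n = card {p. length p = n \<and> riordan_path p}"

end

theory Submission
  imports Defs
begin

text \<open>
  A ballot sequence is followed through its leads \<open>x = #A - #B\<close>, \<open>y = #B - #C\<close> (a quadrant walk
  with steps \<open>(1, 0)\<close>, \<open>(-1, 1)\<close>, \<open>(0, -1)\<close>), a prefix of a Riordan path through its height
  \<open>g \<ge> 0\<close>. Appending a letter acts on weighted counts by a transfer operator \<open>T\<close> on each side.
  The ballot weights \<open>a h (x, y) = max 0 (min x h + 1 - max 0 (h - y))\<close> and the path weights
  \<open>p h g = [g = h] + [g = h + 1]\<close> obey the same recurrence \<open>T (w h) = w (h - 1) + w h + w (h + 1)\<close>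
  (with \<open>w (-1) = 0\<close>), so their weighted counts agree for every length. As \<open>a 0 = 1\<close>, there are
  \<open>R(n) + R(n + 1)\<close> ballot sequences of length \<open>n\<close>. Matching parity means even leads, and the
  indicator \<open>e\<close> of even leads satisfies \<open>T e = 1 - e\<close>; so the numbers \<open>E(n)\<close> of sequences with
  matching parity satisfy \<open>E(n + 1) + E(n) = R(n) + R(n + 1)\<close>, and \<open>E(0) = R(0) = 1\<close>.
\<close>

lemma finite_lists_length_eq_Collect:
  assumes "finite (UNIV :: 'a set)"
  shows "finite {w :: 'a list. length w = n \<and> P w}"
  by (rule finite_subset[OF _ finite_lists_length_eq[OF assms, of n]]) auto

lemma sum_lists_length_Suc:
  fixes P :: "'a list \<Rightarrow> bool" and f :: "'a list \<Rightarrow> 'b :: comm_monoid_add"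
  assumes finite_alphabet: "finite (UNIV :: 'a set)"
    and prefix_closed: "\<And>w l. P (w @ [l]) \<Longrightarrow> P w"
  shows "(\<Sum>w | length w = Suc n \<and> P w. f w)
       = (\<Sum>w | length w = n \<and> P w. \<Sum>l | P (w @ [l]). f (w @ [l]))"
proof -
  let ?W = "{w. length w = n \<and> P w}"
  let ?S = "SIGMA w:?W. {l. P (w @ [l])}"
  have "finite ?W"
    using finite_alphabet by (rule finite_lists_length_eq_Collect)
  moreover have "finite {l. P (w @ [l])}" for w
    using finite_alphabet by (rule finite_subset[rotated]) simp
  ultimately have Sigma: "(\<Sum>w\<in>?W. \<Sum>l | P (w @ [l]). f (w @ [l])) = (\<Sum>(w, l)\<in>?S. f (w @ [l]))"
    by (simp add: sum.Sigma)
  have bij: "bij_betw (\<lambda>(w, l). w @ [l]) ?S {w. length w = Suc n \<and> P w}"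
    unfolding bij_betw_def
  proof
    show "inj_on (\<lambda>(w, l). w @ [l]) ?S"
      by (auto simp: inj_on_def)
    have "v \<in> (\<lambda>(w, l). w @ [l]) ` ?S" if v: "length v = Suc n" "P v" for v
    proof -
      from v have v_snoc: "v = butlast v @ [last v]"
        by (cases v rule: rev_cases) simp_all
      with v prefix_closed[of "butlast v" "last v"] have "(butlast v, last v) \<in> ?S"
        by auto
      then show ?thesis
        by (rule rev_image_eqI) (simp flip: v_snoc)
    qed
    then show "(\<lambda>(w, l). w @ [l]) ` ?S = {w. length w = Suc n \<and> P w}"
      using prefix_closed by auto
  qed
  have "(\<Sum>(w, l)\<in>?S. f (w @ [l])) = (\<Sum>w | length w = Suc n \<and> P w. f w)"
    using sum.reindex_bij_betw[OF bij, of f] by (simp add: case_prod_beta')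
  with Sigma show ?thesis by simp
qed

lemma UNIV_cand: "(UNIV :: cand set) = {A, B, C}"
  using cand.exhaust by auto

lemma sum_Collect_cand:
  "(\<Sum>l | Q l. g l) = (if Q A then g A else 0) + (if Q B then g B else 0) + (if Q C then g C else 0)"
proof -
  have "{l. Q l} = {l \<in> {A, B, C}. Q l}"
    by (simp add: UNIV_cand[symmetric])
  then have "(\<Sum>l | Q l. g l) = (\<Sum>l \<in> {A, B, C}. if Q l then g l else 0)"
    by (simp only:) (rule sum.inter_filter, simp)
  then show ?thesis
    by (simp add: add.assoc)
qed

lemma cnt_Nil [simp]: "cnt c [] = 0"
  by (simp add: cnt_def)

lemma cnt_snoc [simp]: "cnt c (w @ [l]) = cnt c w + of_bool (l = c)"
  by (simp add: cnt_def)

lemma ballot3_Nil [simp]: "ballot3 []"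
  by (simp add: ballot3_def)

lemma ballot3_snoc:
  "ballot3 (w @ [l]) \<longleftrightarrow>
     ballot3 w \<and> cnt B (w @ [l]) \<le> cnt A (w @ [l]) \<and> cnt C (w @ [l]) \<le> cnt B (w @ [l])"
proof -
  have "{1..length (w @ [l])} = insert (Suc (length w)) {1..length w}"
    by auto
  then show ?thesis
    unfolding ballot3_def by auto
qed

lemma ballot3_cnt_le:
  assumes "ballot3 w"
  shows "cnt B w \<le> cnt A w" and "cnt C w \<le> cnt B w"
proof -
  have "cnt B w \<le> cnt A w \<and> cnt C w \<le> cnt B w"
  proof (cases w rule: rev_cases)
    case (snoc v l)
    with assms show ?thesis
      by (simp only: ballot3_snoc)
  qed simp
  then show "cnt B w \<le> cnt A w" and "cnt C w \<le> cnt B w"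
    by simp_all
qed

definition lead_AB :: "cand list \<Rightarrow> nat" where
  "lead_AB w = cnt A w - cnt B w"

definition lead_BC :: "cand list \<Rightarrow> nat" where
  "lead_BC w = cnt B w - cnt C w"

definition ballot_sum :: "(nat \<Rightarrow> nat \<Rightarrow> nat) \<Rightarrow> nat \<Rightarrow> nat" where
  "ballot_sum \<phi> n = (\<Sum>w | length w = n \<and> ballot3 w. \<phi> (lead_AB w) (lead_BC w))"

definition ballot_step :: "(nat \<Rightarrow> nat \<Rightarrow> nat) \<Rightarrow> nat \<Rightarrow> nat \<Rightarrow> nat" where
  "ballot_step \<phi> x y =
     \<phi> (Suc x) y + (if x > 0 then \<phi> (x - 1) (Suc y) else 0) + (if y > 0 then \<phi> x (y - 1) else 0)"

lemma ballot_sum_0: "ballot_sum \<phi> 0 = \<phi> 0 0"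
proof -
  have "{w. length w = 0 \<and> ballot3 w} = {[]}"
    by auto
  then show ?thesis
    by (simp add: ballot_sum_def lead_AB_def lead_BC_def)
qed

lemma ballot_sum_Suc: "ballot_sum \<phi> (Suc n) = ballot_sum (ballot_step \<phi>) n"
proof -
  have "(\<Sum>l | ballot3 (w @ [l]). \<phi> (lead_AB (w @ [l])) (lead_BC (w @ [l])))
      = ballot_step \<phi> (lead_AB w) (lead_BC w)" if "ballot3 w" for w
    using ballot3_cnt_le[OF that] that
    by (simp add: sum_Collect_cand ballot3_snoc ballot_step_def lead_AB_def lead_BC_def
        Suc_diff_le)
  then show ?thesis
    unfolding ballot_sum_def
    by (simp add: sum_lists_length_Suc[OF _ ballot3_snoc[THEN iffD1, THEN conjunct1]] UNIV_cand)
qed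

lemma ballot_sum_add: "ballot_sum (\<lambda>x y. \<phi> x y + \<chi> x y) n = ballot_sum \<phi> n + ballot_sum \<chi> n"
  by (simp add: ballot_sum_def sum.distrib)

lemma UNIV_step: "(UNIV :: step set) = {U, F, D}"
  using step.exhaust by auto

lemma sum_Collect_step:
  "(\<Sum>s | Q s. g s) = (if Q U then g U else 0) + (if Q F then g F else 0) + (if Q D then g D else 0)"
proof -
  have "{s. Q s} = {s \<in> {U, F, D}. Q s}"
    by (simp add: UNIV_step[symmetric])
  then have "(\<Sum>s | Q s. g s) = (\<Sum>s \<in> {U, F, D}. if Q s then g s else 0)"
    by (simp only:) (rule sum.inter_filter, simp)
  then show ?thesis
    by (simp add: add.assoc)
qed

definition riordan_prefix :: "step list \<Rightarrow> bool" where
  "riordan_prefix p \<longleftrightarrow>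
     (\<forall>k\<le>length p. height p k \<ge> 0) \<and> (\<forall>i<length p. p ! i = F \<longrightarrow> height p i \<noteq> 0)"

definition end_height :: "step list \<Rightarrow> int" where
  "end_height p = height p (length p)"

lemma riordan_path_iff: "riordan_path p \<longleftrightarrow> riordan_prefix p \<and> end_height p = 0"
  by (auto simp: riordan_path_def riordan_prefix_def end_height_def)

lemma height_snoc: "k \<le> length p \<Longrightarrow> height (p @ [s]) k = height p k"
  by (simp add: height_def)

lemma end_height_snoc: "end_height (p @ [s]) = end_height p + stepval s"
  by (simp add: end_height_def height_def)

lemma riordan_prefix_Nil [simp]: "riordan_prefix []"
  by (simp add: riordan_prefix_def height_def)

lemma riordan_prefix_snoc:
  "riordan_prefix (p @ [s]) \<longleftrightarrow>
     riordan_prefix p \<and> end_height p + stepval s \<ge> 0 \<and> (s = F \<longrightarrow> end_height p \<noteq> 0)"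
  using height_snoc[of _ p s] end_height_snoc[of p s]
  by (auto simp: riordan_prefix_def end_height_def le_Suc_eq less_Suc_eq nth_append)

lemma riordan_prefix_end_height_nonneg: "riordan_prefix p \<Longrightarrow> end_height p \<ge> 0"
  by (simp add: riordan_prefix_def end_height_def)

definition path_sum :: "(int \<Rightarrow> nat) \<Rightarrow> nat \<Rightarrow> nat" where
  "path_sum \<psi> n = (\<Sum>p | length p = n \<and> riordan_prefix p. \<psi> (end_height p))"

definition path_step :: "(int \<Rightarrow> nat) \<Rightarrow> int \<Rightarrow> nat" where
  "path_step \<psi> g = \<psi> (g + 1) + (if g \<noteq> 0 then \<psi> g else 0) + (if g \<ge> 1 then \<psi> (g - 1) else 0)"

lemma path_sum_0: "path_sum \<psi> 0 = \<psi> 0"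
proof -
  have "{p. length p = 0 \<and> riordan_prefix p} = {[]}"
    by auto
  then show ?thesis
    by (simp add: path_sum_def end_height_def height_def)
qed

lemma path_sum_Suc: "path_sum \<psi> (Suc n) = path_sum (path_step \<psi>) n"
proof -
  have "(\<Sum>s | riordan_prefix (p @ [s]). \<psi> (end_height (p @ [s]))) = path_step \<psi> (end_height p)"
    if "riordan_prefix p" for p
    using riordan_prefix_end_height_nonneg[OF that] that
    by (simp add: sum_Collect_step riordan_prefix_snoc end_height_snoc path_step_def)
  then show ?thesis
    unfolding path_sum_def
    by (simp add: sum_lists_length_Suc[OF _ riordan_prefix_snoc[THEN iffD1, THEN conjunct1]] UNIV_step)
qed

lemma path_sum_add: "path_sum (\<lambda>g. \<psi> g + \<chi> g) n = path_sum \<psi> n + path_sum \<chi> n"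
  by (simp add: path_sum_def sum.distrib)

lemma path_sum_cong: "(\<And>g. g \<ge> 0 \<Longrightarrow> \<psi> g = \<chi> g) \<Longrightarrow> path_sum \<psi> n = path_sum \<chi> n"
  unfolding path_sum_def by (rule sum.cong) (simp_all add: riordan_prefix_end_height_nonneg)

definition ballot_weight :: "nat \<Rightarrow> nat \<Rightarrow> nat \<Rightarrow> nat" where
  "ballot_weight h x y = Suc (min x h) - (h - y)"

definition path_weight :: "nat \<Rightarrow> int \<Rightarrow> nat" where
  "path_weight h g = of_bool (g = int h) + of_bool (g = int h + 1)"

lemma ballot_step_ballot_weight:
  "ballot_step (ballot_weight h) x y
     = (if h > 0 then ballot_weight (h - 1) x y else 0) + ballot_weight h x y + ballot_weight (Suc h) x y"
  unfolding ballot_step_def ballot_weight_def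
  by (cases h; cases x; cases y) (simp_all add: min_def split: nat_diff_split)

lemma path_step_path_weight:
  "g \<ge> 0 \<Longrightarrow> path_step (path_weight h) g
     = (if h > 0 then path_weight (h - 1) g else 0) + path_weight h g + path_weight (Suc h) g"
  by (cases h) (auto simp: path_step_def path_weight_def)

lemma ballot_sum_ballot_weight: "ballot_sum (ballot_weight h) n = path_sum (path_weight h) n"
proof (induction n arbitrary: h)
  case 0
  show ?case
    by (simp add: ballot_sum_0 path_sum_0 ballot_weight_def path_weight_def)
next
  case (Suc n)
  have "ballot_sum (ballot_weight h) (Suc n)
      = (if h > 0 then ballot_sum (ballot_weight (h - 1)) n else 0)
        + ballot_sum (ballot_weight h) n + ballot_sum (ballot_weight (Suc h)) n"
    by (cases "h > 0")
      (simp_all add: ballot_sum_Suc ballot_step_ballot_weight[abs_def] ballot_sum_add)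
  also have "\<dots> = (if h > 0 then path_sum (path_weight (h - 1)) n else 0)
        + path_sum (path_weight h) n + path_sum (path_weight (Suc h)) n"
    by (simp add: Suc.IH)
  also have "\<dots> = path_sum (\<lambda>g. (if h > 0 then path_weight (h - 1) g else 0)
        + path_weight h g + path_weight (Suc h) g) n"
    by (cases "h > 0") (simp_all add: path_sum_add)
  also have "\<dots> = path_sum (path_weight h) (Suc n)"
    unfolding path_sum_Suc by (rule path_sum_cong) (simp add: path_step_path_weight)
  finally show ?case .
qed

lemma riordan_eq_path_sum: "riordan n = path_sum (\<lambda>g. of_bool (g = 0)) n"
proof -
  have "finite {p :: step list. length p = n \<and> riordan_prefix p}"
    by (rule finite_lists_length_eq_Collect) (simp add: UNIV_step)
  then show ?thesis
    by (simp add: riordan_def path_sum_def riordan_path_iff Int_def conj_assoc)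
qed

lemma riordan_0: "riordan 0 = 1"
  by (simp add: riordan_eq_path_sum path_sum_0)

lemma card_ballot3_eq_riordan_add: "card {w. length w = n \<and> ballot3 w} = riordan n + riordan (Suc n)"
proof -
  have "card {w. length w = n \<and> ballot3 w} = ballot_sum (ballot_weight 0) n"
    by (simp add: ballot_sum_def ballot_weight_def)
  also have "\<dots> = path_sum (path_weight 0) n"
    by (rule ballot_sum_ballot_weight)
  also have "\<dots> = path_sum (\<lambda>g. of_bool (g = 0)) n + path_sum (path_step (\<lambda>g. of_bool (g = 0))) n"
    unfolding path_sum_add[symmetric]
    by (rule path_sum_cong) (simp add: path_weight_def path_step_def)
  finally show ?thesis
    by (simp add: riordan_eq_path_sum path_sum_Suc)
qed

definition even_leads :: "nat \<Rightarrow> nat \<Rightarrow> nat" where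
  "even_leads x y = of_bool (even x \<and> even y)"

lemma matching_parity_iff_even_leads:
  assumes "ballot3 w"
  shows "matching_parity w \<longleftrightarrow> even (lead_AB w) \<and> even (lead_BC w)"
  using ballot3_cnt_le[OF assms]
  by (simp add: matching_parity_def lead_AB_def lead_BC_def mod2_eq_if)

lemma card_matching_parity_eq_ballot_sum:
  "card {w. length w = n \<and> ballot3 w \<and> matching_parity w} = ballot_sum even_leads n"
proof -
  have "finite {w :: cand list. length w = n \<and> ballot3 w}"
    by (rule finite_lists_length_eq_Collect) (simp add: UNIV_cand)
  then show ?thesis
    by (simp add: ballot_sum_def even_leads_def matching_parity_iff_even_leads Int_def conj_assoc
        cong: conj_cong)
qed

lemma ballot_step_even_leads: "ballot_step even_leads x y = 1 - even_leads x y"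
  by (cases x; cases y) (simp_all add: ballot_step_def even_leads_def)

lemma card_matching_parity_Suc:
  "card {w. length w = Suc n \<and> ballot3 w \<and> matching_parity w}
     + card {w. length w = n \<and> ballot3 w \<and> matching_parity w}
   = card {w. length w = n \<and> ballot3 w}"
proof -
  have "ballot_sum even_leads (Suc n) + ballot_sum even_leads n = ballot_sum (\<lambda>x y. 1) n"
    by (simp add: ballot_sum_Suc ballot_step_even_leads[abs_def] ballot_sum_add[symmetric]
        even_leads_def)
  then show ?thesis
    by (simp add: card_matching_parity_eq_ballot_sum ballot_sum_def)
qed

lemma card_matching_parity_eq_riordan:
  "card {w. length w = n \<and> ballot3 w \<and> matching_parity w} = riordan n"
proof (induction n)
  case 0
  show ?case
    unfolding card_matching_parity_eq_ballot_sum by (simp add: ballot_sum_0 even_leads_def riordan_0)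
next
  case (Suc n)
  then show ?case
    using card_matching_parity_Suc[of n] by (simp add: card_ballot3_eq_riordan_add)
qed

theorem theorem4p3:
  fixes n :: nat
  assumes "n \<ge> 1"
  shows "card {w :: cand list. length w = n \<and> ballot3 w \<and> matching_parity w} = riordan n"
  by (rule card_matching_parity_eq_riordan)

end
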